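(* Let $\Sigma^*\to G$, $w\mapsto\overline w$, be a choice of generators for a group $G$, let $\#\notin\Sigma$, let $R\subset\Sigma^*$ be a regular combing, and suppose $M=\{u\#v\#w\mid u,v,w\in R,\ \overline u\,\overline v\,\overline w=1\}$ is context-free. Let $\mathcal G$ be a context-free grammar for $M$ in Chomsky normal form (all productions of the form $A\to BC$ or $A\to a$ with $A,B,C$ nonterminals and $a\in\Sigma\cup\{\#\}$) such that every production participates in some derivation of a word of $M$ and every nonterminal occurs in some production. Call a nonterminal $A$ of rank zero if no terminal word derivable from $A$ contains $\#$. Then there exist a constant $K'$ and a regular combing $R'\subset R$ such that every word of $M\cap (R'\#R'\#R')$ has a derivation in $\mathcal G$ in which each nonterminal of rank zero derives a subword of length at most $K'$.
   Context: A choice of generators for $G$ consists of a finite alphabet $\Sigma$ with formal inverses (a fixed-point-free involution $a\mapsto a^{-1}$ on $\Sigma$, extended by $(wv)^{-1}=v^{-1}w^{-1}$) and a surjective monoid homomorphism $\Sigma^*\to G$, $w\mapsto\overline w$, with $\overline{w^{-1}}=\overline w^{-1}$. A regular combing is a regular language $R\subset\Sigma^*$ mapping onto $G$. In a derivation of a terminal word, each occurrence of a nonterminal derives a subword of that word. *)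

theory Defs
  imports "HOL-Algebra.Group"
begin

definition regular_on :: "'a set \<Rightarrow> 'a list set \<Rightarrow> bool" where
  "regular_on \<Sigma> L \<longleftrightarrow>
     (\<exists>(Q::nat set) q0 (\<delta>::nat \<Rightarrow> 'a \<Rightarrow> nat) F.
        finite Q \<and> q0 \<in> Q \<and> (\<forall>q\<in>Q. \<forall>a\<in>\<Sigma>. \<delta> q a \<in> Q) \<and> F \<subseteq> Q \<and>
        L = {w \<in> lists \<Sigma>. foldl \<delta> q0 w \<in> F})"

definition word_inv :: "('a \<Rightarrow> 'a) \<Rightarrow> 'a list \<Rightarrow> 'a list" where
  "word_inv iv w = rev (map iv w)"

definition choice_of_generators ::
  "('g, 'b) monoid_scheme \<Rightarrow> 'a set \<Rightarrow> ('a \<Rightarrow> 'a) \<Rightarrow> ('a list \<Rightarrow> 'g) \<Rightarrow> bool" where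
  "choice_of_generators G \<Sigma> iv \<phi> \<longleftrightarrow>
     group G \<and> finite \<Sigma> \<and>
     (\<forall>a\<in>\<Sigma>. iv a \<in> \<Sigma> \<and> iv (iv a) = a \<and> iv a \<noteq> a) \<and>
     \<phi> [] = \<one>\<^bsub>G\<^esub> \<and>
     (\<forall>u\<in>lists \<Sigma>. \<forall>v\<in>lists \<Sigma>. \<phi> (u @ v) = \<phi> u \<otimes>\<^bsub>G\<^esub> \<phi> v) \<and>
     \<phi> ` lists \<Sigma> = carrier G \<and>
     (\<forall>w\<in>lists \<Sigma>. \<phi> (word_inv iv w) = inv\<^bsub>G\<^esub> (\<phi> w))"

definition regular_combing ::
  "('g, 'b) monoid_scheme \<Rightarrow> 'a set \<Rightarrow> ('a list \<Rightarrow> 'g) \<Rightarrow> 'a list set \<Rightarrow> bool" where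
  "regular_combing G \<Sigma> \<phi> R \<longleftrightarrow> R \<subseteq> lists \<Sigma> \<and> regular_on \<Sigma> R \<and> \<phi> ` R = carrier G"

definition word_problem_M ::
  "('g, 'b) monoid_scheme \<Rightarrow> ('a list \<Rightarrow> 'g) \<Rightarrow> 'a \<Rightarrow> 'a list set \<Rightarrow> 'a list set" where
  "word_problem_M G \<phi> h R =
     {u @ [h] @ v @ [h] @ w | u v w. u \<in> R \<and> v \<in> R \<and> w \<in> R \<and>
        \<phi> u \<otimes>\<^bsub>G\<^esub> \<phi> v \<otimes>\<^bsub>G\<^esub> \<phi> w = \<one>\<^bsub>G\<^esub>}"

definition three_concat :: "'a \<Rightarrow> 'a list set \<Rightarrow> 'a list set" where
  "three_concat h R = {u @ [h] @ v @ [h] @ w | u v w. u \<in> R \<and> v \<in> R \<and> w \<in> R}"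

text \<open>A derivation of a terminal word is represented by its parse tree; each node
  is an occurrence of a nonterminal deriving the yield of its subtree.\<close>

datatype ('n, 't) ptree = Leaf 'n 't | Node 'n "('n, 't) ptree" "('n, 't) ptree"

fun root :: "('n, 't) ptree \<Rightarrow> 'n" where
  "root (Leaf A a) = A"
| "root (Node A l r) = A"

fun yield :: "('n, 't) ptree \<Rightarrow> 't list" where
  "yield (Leaf A a) = [a]"
| "yield (Node A l r) = yield l @ yield r"

fun subtrees :: "('n, 't) ptree \<Rightarrow> ('n, 't) ptree set" where
  "subtrees (Leaf A a) = {Leaf A a}"
| "subtrees (Node A l r) = insert (Node A l r) (subtrees l \<union> subtrees r)"

fun valid_tree :: "('n \<times> 'n \<times> 'n) set \<Rightarrow> ('n \<times> 't) set \<Rightarrow> ('n, 't) ptree \<Rightarrow> bool" where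
  "valid_tree P2 P1 (Leaf A a) \<longleftrightarrow> (A, a) \<in> P1"
| "valid_tree P2 P1 (Node A l r) \<longleftrightarrow>
     (A, root l, root r) \<in> P2 \<and> valid_tree P2 P1 l \<and> valid_tree P2 P1 r"

definition lang_from :: "('n \<times> 'n \<times> 'n) set \<Rightarrow> ('n \<times> 't) set \<Rightarrow> 'n \<Rightarrow> 't list set" where
  "lang_from P2 P1 A = {yield t | t. valid_tree P2 P1 t \<and> root t = A}"

fun bin_prods :: "('n, 't) ptree \<Rightarrow> ('n \<times> 'n \<times> 'n) set" where
  "bin_prods (Leaf A a) = {}"
| "bin_prods (Node A l r) = insert (A, root l, root r) (bin_prods l \<union> bin_prods r)"

fun term_prods :: "('n, 't) ptree \<Rightarrow> ('n \<times> 't) set" where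
  "term_prods (Leaf A a) = {(A, a)}"
| "term_prods (Node A l r) = term_prods l \<union> term_prods r"

definition cnf_grammar ::
  "'n set \<Rightarrow> 't set \<Rightarrow> ('n \<times> 'n \<times> 'n) set \<Rightarrow> ('n \<times> 't) set \<Rightarrow> 'n \<Rightarrow> bool" where
  "cnf_grammar N T P2 P1 S \<longleftrightarrow>
     finite N \<and> S \<in> N \<and> finite P2 \<and> finite P1 \<and>
     (\<forall>(A, B, C) \<in> P2. A \<in> N \<and> B \<in> N \<and> C \<in> N) \<and>
     (\<forall>(A, a) \<in> P1. A \<in> N \<and> a \<in> T)"

definition grammar_trim ::
  "'n set \<Rightarrow> ('n \<times> 'n \<times> 'n) set \<Rightarrow> ('n \<times> 't) set \<Rightarrow> 'n \<Rightarrow> bool" where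
  "grammar_trim N P2 P1 S \<longleftrightarrow>
     (\<forall>p\<in>P2. \<exists>t. valid_tree P2 P1 t \<and> root t = S \<and> p \<in> bin_prods t) \<and>
     (\<forall>p\<in>P1. \<exists>t. valid_tree P2 P1 t \<and> root t = S \<and> p \<in> term_prods t) \<and>
     (\<forall>A\<in>N. (\<exists>B C. (A, B, C) \<in> P2 \<or> (B, A, C) \<in> P2 \<or> (B, C, A) \<in> P2) \<or>
            (\<exists>a. (A, a) \<in> P1))"

definition rank_zero :: "('n \<times> 'n \<times> 'n) set \<Rightarrow> ('n \<times> 't) set \<Rightarrow> 't \<Rightarrow> 'n \<Rightarrow> bool" where
  "rank_zero P2 P1 h A \<longleftrightarrow> (\<forall>w \<in> lang_from P2 P1 A. h \<notin> set w)"

end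

theory Submission
  imports Defs "HOL-Library.Sublist"
begin

text \<open>Only rank-zero nonterminals \<open>B\<close> occurring in a derivation from \<open>S\<close> matter. Such a \<open>B\<close>
  sits in a context \<open>\<alpha> _ \<beta>\<close> of a word of \<open>M\<close>, and erasing the separators from \<open>\<alpha> z \<beta>\<close> gives
  a relator for every word \<open>z\<close> derived from \<open>B\<close>, so all these \<open>z\<close> have the same value in \<open>G\<close>.
  As \<open>R\<close> is regular, its syntactic congruence has finite index, so there is a \<open>K\<close> such that
  every word derived from such a \<open>B\<close> is congruent to one of length below \<open>K\<close> also derived from
  \<open>B\<close>. Let \<open>R'\<close> consist of the words of \<open>R\<close> having no factor derived from such a \<open>B\<close> with
  length in \<open>(K, 2K]\<close>. This excludes finitely many factors, so \<open>R'\<close> is regular, and a shortest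
  word of \<open>R\<close> with a given value lies in \<open>R'\<close>, since a forbidden factor could be replaced by a
  shorter congruent one of the same value. Finally, in a derivation of a word of
  \<open>M \<inter> R'#R'#R'\<close> a rank-zero subtree with yield longer than \<open>2K\<close> contains one whose yield has
  length in \<open>(K, 2K]\<close>; that yield contains no \<open>#\<close>, hence is a factor of one of the three words
  of \<open>R'\<close>, which is impossible. So \<open>K' = 2K\<close> works.\<close>

section \<open>Regular languages\<close>

lemma foldl_in_states:
  assumes "\<forall>q\<in>Q. \<forall>a\<in>\<Sigma>. \<delta> q a \<in> Q" "q \<in> Q" "w \<in> lists \<Sigma>"
  shows "foldl \<delta> q w \<in> Q"
  using assms(2,3) by (induction w arbitrary: q) (auto simp: assms(1))

lemma regular_on_dfa:
  fixes Q :: "'s set" and \<delta> :: "'s \<Rightarrow> 'a \<Rightarrow> 's"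
  assumes fin: "finite Q" and q0: "q0 \<in> Q" and closed: "\<forall>q\<in>Q. \<forall>a\<in>\<Sigma>. \<delta> q a \<in> Q"
    and F: "F \<subseteq> Q"
  shows "regular_on \<Sigma> {w \<in> lists \<Sigma>. foldl \<delta> q0 w \<in> F}"
proof -
  obtain f :: "'s \<Rightarrow> nat" and n where "f ` Q = {i. i < n}" and inj: "inj_on f Q"
    using finite_imp_inj_to_nat_seg[OF fin] by blast
  define \<delta>' where "\<delta>' i a = f (\<delta> (inv_into Q f i) a)" for i a
  have run: "foldl \<delta>' (f q) w = f (foldl \<delta> q w)" if "q \<in> Q" "w \<in> lists \<Sigma>" for q w
    using that by (induction w arbitrary: q) (auto simp: \<delta>'_def inj closed)
  have "foldl \<delta> q0 w \<in> F \<longleftrightarrow> foldl \<delta>' (f q0) w \<in> f ` F" if "w \<in> lists \<Sigma>" for w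
    unfolding run[OF q0 that]
    using foldl_in_states[OF closed q0 that] F by (simp add: inj_on_image_mem_iff[OF inj])
  then have "{w \<in> lists \<Sigma>. foldl \<delta> q0 w \<in> F} = {w \<in> lists \<Sigma>. foldl \<delta>' (f q0) w \<in> f ` F}"
    by blast
  moreover have "\<forall>i\<in>f ` Q. \<forall>a\<in>\<Sigma>. \<delta>' i a \<in> f ` Q"
    using closed inj by (auto simp: \<delta>'_def)
  moreover have "finite (f ` Q)" "f q0 \<in> f ` Q" "f ` F \<subseteq> f ` Q"
    using fin q0 F by auto
  ultimately show ?thesis
    unfolding regular_on_def by blast
qed

definition lastn :: "nat \<Rightarrow> 'a list \<Rightarrow> 'a list" where
  "lastn M xs = drop (length xs - M) xs"

lemma lastn_snoc: "lastn M (lastn M w @ [a]) = lastn M (w @ [a])"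
  unfolding lastn_def by (cases "length w \<le> M") (auto simp: Suc_diff_le)

lemma suffix_drop_iff:
  assumes "length y + k \<le> length z"
  shows "suffix y (drop k z) \<longleftrightarrow> suffix y z"
proof
  show "suffix y (drop k z) \<Longrightarrow> suffix y z"
    using suffix_drop suffix_order.trans by blast
  assume "suffix y z"
  moreover have "length y \<le> length (drop k z)"
    using assms by simp
  ultimately show "suffix y (drop k z)"
    using suffix_drop suffix_length_suffix by blast
qed

lemma suffix_lastn_snoc_iff:
  assumes "length y \<le> Suc M"
  shows "suffix y (lastn M w @ [a]) \<longleftrightarrow> suffix y (w @ [a])"
proof (cases "length w \<le> M")
  case False
  then have "lastn M w @ [a] = drop (length w - M) (w @ [a])"
    by (simp add: lastn_def)
  then show ?thesis
    using assms False suffix_drop_iff[of y "length w - M" "w @ [a]"] by simp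
qed (simp add: lastn_def)

text \<open>The automaton runs the one for \<open>R\<close> alongside a window holding the last \<open>M\<close> letters
  read and a flag recording whether a forbidden factor has been seen.\<close>
lemma regular_on_avoiding_factors:
  assumes reg: "regular_on \<Sigma> R" and fin: "finite \<Sigma>" and bounded: "\<forall>y\<in>F. length y \<le> M"
  shows "regular_on \<Sigma> {u \<in> R. \<not> (\<exists>y\<in>F. sublist y u)}"
proof -
  obtain Q :: "nat set" and q0 \<delta> Fin where Q: "finite Q" "q0 \<in> Q" and
    closed: "\<forall>q\<in>Q. \<forall>a\<in>\<Sigma>. \<delta> q a \<in> Q" and Fin: "Fin \<subseteq> Q"
    and R: "R = {w \<in> lists \<Sigma>. foldl \<delta> q0 w \<in> Fin}"
    using reg unfolding regular_on_def by blast
  define W where "W = {xs \<in> lists \<Sigma>. length xs \<le> M}"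
  define step where
    "step = (\<lambda>(q, s, b) a. (\<delta> q a, lastn M (s @ [a]), b \<or> (\<exists>y\<in>F. suffix y (s @ [a]))))"
  define start where "start = (q0, [] :: 'a list, [] \<in> F)"
  have lastn_W: "lastn M s \<in> W" if "s \<in> lists \<Sigma>" for s
    using that unfolding W_def lastn_def by (auto dest: in_set_dropD)
  have finite_W: "finite W"
    using finite_lists_length_le[OF fin, of M] by (rule finite_subset[rotated]) (auto simp: W_def)
  have run: "foldl step start w = (foldl \<delta> q0 w, lastn M w, \<exists>y\<in>F. sublist y w)" for w
  proof (induction w rule: rev_induct)
    case (snoc a w)
    have "(\<exists>y\<in>F. sublist y w \<or> suffix y (lastn M w @ [a])) \<longleftrightarrow> (\<exists>y\<in>F. sublist y (w @ [a]))"
      using suffix_lastn_snoc_iff bounded sublist_snoc by (metis le_SucI)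
    then show ?case
      using snoc.IH by (auto simp: step_def lastn_snoc)
  qed (auto simp: start_def lastn_def)
  have "{u \<in> R. \<not> (\<exists>y\<in>F. sublist y u)} = {w \<in> lists \<Sigma>. foldl step start w \<in> Fin \<times> W \<times> {False}}"
    using lastn_W by (auto simp: R run)
  also have "regular_on \<Sigma> \<dots>"
  proof (rule regular_on_dfa)
    show "finite (Q \<times> W \<times> (UNIV :: bool set))"
      using Q(1) finite_W by simp
    show "\<forall>x\<in>Q \<times> W \<times> UNIV. \<forall>a\<in>\<Sigma>. step x a \<in> Q \<times> W \<times> UNIV"
    proof (intro ballI)
      fix x a assume x: "x \<in> Q \<times> W \<times> (UNIV :: bool set)" and a: "a \<in> \<Sigma>"
      obtain q s b where x_def: "x = (q, s, b)"
        by (cases x)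
      have "s @ [a] \<in> lists \<Sigma>"
        using x a by (simp add: x_def W_def)
      then show "step x a \<in> Q \<times> W \<times> UNIV"
        using x a closed lastn_W by (simp add: x_def step_def)
    qed
  qed (use Q(2) Fin in \<open>auto simp: start_def W_def\<close>)
  finally show ?thesis .
qed

definition contexts :: "'a list set \<Rightarrow> 'a list \<Rightarrow> ('a list \<times> 'a list) set" where
  "contexts R y = {(p, q). p @ y @ q \<in> R}"

text \<open>Finite index of the syntactic congruence: the contexts of \<open>y\<close> only depend on the
  state transformation of \<open>y\<close>, and there are finitely many of those.\<close>
lemma finite_contexts_if_regular:
  assumes "regular_on \<Sigma> R"
  shows "finite (contexts R ` lists \<Sigma>)"
proof -
  obtain Q :: "nat set" and q0 \<delta> Fin where Q: "finite Q" "q0 \<in> Q" and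
    closed: "\<forall>q\<in>Q. \<forall>a\<in>\<Sigma>. \<delta> q a \<in> Q" and R: "R = {w \<in> lists \<Sigma>. foldl \<delta> q0 w \<in> Fin}"
    using assms unfolding regular_on_def by blast
  define ctx where
    "ctx f = {(p, q). p \<in> lists \<Sigma> \<and> q \<in> lists \<Sigma> \<and> foldl \<delta> (f (foldl \<delta> q0 p)) q \<in> Fin}"
    for f :: "nat \<Rightarrow> nat"
  have "contexts R y = ctx (restrict (\<lambda>q. foldl \<delta> q y) Q)" if y: "y \<in> lists \<Sigma>" for y
  proof -
    have "(p, q) \<in> contexts R y \<longleftrightarrow> (p, q) \<in> ctx (restrict (\<lambda>q. foldl \<delta> q y) Q)" for p q
    proof (cases "p \<in> lists \<Sigma>")
      case True
      then show ?thesis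
        using y foldl_in_states[OF closed Q(2) True] by (simp add: contexts_def ctx_def R)
    qed (simp add: contexts_def ctx_def R)
    then show ?thesis
      by auto
  qed
  then have "contexts R ` lists \<Sigma> \<subseteq> ctx ` (Q \<rightarrow>\<^sub>E Q)"
    using foldl_in_states[OF closed] by fastforce
  then show ?thesis
    using Q(1) by (meson finite_PiE finite_imageI finite_subset)
qed

lemma finite_image_bounded_representatives:
  fixes m :: "'a \<Rightarrow> nat"
  assumes "finite (f ` A)"
  shows "\<exists>K. \<forall>x\<in>A. \<exists>x'\<in>A. f x' = f x \<and> m x' < K"
proof -
  obtain C where C: "C \<subseteq> A" "finite C" "f ` A = f ` C"
    using finite_subset_image[OF assms subset_refl] by blast
  have "\<exists>x'\<in>A. f x' = f x \<and> m x' < Suc (Max (m ` C))" if "x \<in> A" for x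
  proof -
    have "f x \<in> f ` C"
      using that C(3) by blast
    then obtain x' where x': "x' \<in> C" "f x' = f x"
      by (auto elim!: imageE)
    then have "m x' \<le> Max (m ` C)"
      using C(2) by simp
    then show ?thesis
      using x' C(1) by (auto simp: less_Suc_eq_le)
  qed
  then show ?thesis
    by blast
qed

text \<open>A shortest representative in \<open>R\<close> of a value contains no factor from \<open>F\<close>.\<close>
lemma image_avoiding_shortenable_factors:
  assumes shorten: "\<forall>y\<in>F. \<exists>y'. length y' < length y \<and>
      (\<forall>p q. p @ y @ q \<in> R \<longrightarrow> p @ y' @ q \<in> R \<and> f (p @ y' @ q) = f (p @ y @ q))"
  shows "f ` {u \<in> R. \<not> (\<exists>y\<in>F. sublist y u)} = f ` R"
proof
  show "f ` R \<subseteq> f ` {u \<in> R. \<not> (\<exists>y\<in>F. sublist y u)}"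
  proof
    fix g assume "g \<in> f ` R"
    then obtain u where u: "u \<in> R" "f u = g"
      and shortest: "\<And>u'. u' \<in> R \<Longrightarrow> f u' = g \<Longrightarrow> length u \<le> length u'"
      using ex_has_least_nat[of "\<lambda>u. u \<in> R \<and> f u = g" _ length] by blast
    have "\<not> sublist y u" if "y \<in> F" for y
    proof
      assume "sublist y u"
      then obtain p q where "u = p @ y @ q"
        unfolding sublist_def by blast
      moreover obtain y' where "length y' < length y"
        "p @ y @ q \<in> R \<longrightarrow> p @ y' @ q \<in> R \<and> f (p @ y' @ q) = f (p @ y @ q)"
        using shorten \<open>y \<in> F\<close> by blast
      ultimately show False
        using u shortest[of "p @ y' @ q"] by auto
    qed
    then show "g \<in> f ` {u \<in> R. \<not> (\<exists>y\<in>F. sublist y u)}"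
      using u by blast
  qed
qed auto

section \<open>Parse trees\<close>

lemma yield_in_lang_from: "valid_tree P2 P1 t \<Longrightarrow> yield t \<in> lang_from P2 P1 (root t)"
  by (auto simp: lang_from_def)

lemma lang_fromE:
  assumes "w \<in> lang_from P2 P1 A"
  obtains t where "valid_tree P2 P1 t" "root t = A" "yield t = w"
  using assms by (auto simp: lang_from_def)

lemma append_in_lang_from:
  assumes "(A, B, C) \<in> P2" "u \<in> lang_from P2 P1 B" "v \<in> lang_from P2 P1 C"
  shows "u @ v \<in> lang_from P2 P1 A"
proof -
  obtain l r where "valid_tree P2 P1 l" "root l = B" "yield l = u"
    and "valid_tree P2 P1 r" "root r = C" "yield r = v"
    using assms(2,3) by (auto elim!: lang_fromE)
  then show ?thesis
    using yield_in_lang_from[of P2 P1 "Node A l r"] assms(1) by simp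
qed

lemma subtrees_trans: "s \<in> subtrees t \<Longrightarrow> r \<in> subtrees s \<Longrightarrow> r \<in> subtrees t"
  by (induction t) auto

lemma valid_tree_subtree: "valid_tree P2 P1 t \<Longrightarrow> s \<in> subtrees t \<Longrightarrow> valid_tree P2 P1 s"
  by (induction t) auto

lemma set_yield_subset: "valid_tree P2 P1 t \<Longrightarrow> set (yield t) \<subseteq> snd ` P1"
  by (induction t) force+

lemma root_in_lhs: "valid_tree P2 P1 t \<Longrightarrow> root t \<in> fst ` P2 \<union> fst ` P1"
  by (cases t) force+

lemma subtree_context:
  assumes "valid_tree P2 P1 t" "s \<in> subtrees t"
  shows "\<exists>\<alpha> \<beta>. yield t = \<alpha> @ yield s @ \<beta> \<and>
    (\<forall>z \<in> lang_from P2 P1 (root s). \<alpha> @ z @ \<beta> \<in> lang_from P2 P1 (root t))"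
  using assms
proof (induction t)
  case (Leaf A a)
  then show ?case
    by (intro exI[of _ "[]"]) auto
next
  case (Node A l r)
  consider "s = Node A l r" | "s \<in> subtrees l" | "s \<in> subtrees r"
    using Node.prems(2) by auto
  then show ?case
  proof cases
    case 1
    then show ?thesis
      by (intro exI[of _ "[]"]) auto
  next
    case 2
    then obtain \<alpha> \<beta> where "yield l = \<alpha> @ yield s @ \<beta>"
      and "\<forall>z \<in> lang_from P2 P1 (root s). \<alpha> @ z @ \<beta> \<in> lang_from P2 P1 (root l)"
      using Node by auto
    then show ?thesis
      using Node.prems(1) yield_in_lang_from[of P2 P1 r]
      by (intro exI[of _ \<alpha>] exI[of _ "\<beta> @ yield r"])
        (auto dest: append_in_lang_from[of A "root l" "root r"])
  next
    case 3
    then obtain \<alpha> \<beta> where "yield r = \<alpha> @ yield s @ \<beta>"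
      and "\<forall>z \<in> lang_from P2 P1 (root s). \<alpha> @ z @ \<beta> \<in> lang_from P2 P1 (root r)"
      using Node by auto
    then show ?thesis
      using Node.prems(1) yield_in_lang_from[of P2 P1 l]
      by (intro exI[of _ "yield l @ \<alpha>"] exI[of _ \<beta>])
        (auto dest: append_in_lang_from[of A "root l" "root r"])
  qed
qed

lemma rank_zero_subtree:
  assumes "rank_zero P2 P1 h (root t)" "valid_tree P2 P1 t" "s \<in> subtrees t"
  shows "rank_zero P2 P1 h (root s)"
  using assms subtree_context[OF assms(2,3)] by (fastforce simp: rank_zero_def)

text \<open>Descend while some child still has a yield longer than \<open>K\<close>; as derivations are binary,
  the node reached has a yield of length at most \<open>2 K\<close>.\<close>
lemma exists_subtree_yield_between:
  assumes "0 < K" "K < length (yield t)"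
  shows "\<exists>s\<in>subtrees t. K < length (yield s) \<and> length (yield s) \<le> 2 * K"
  using assms(2)
proof (induction t)
  case (Node A l r)
  then show ?case
    by (cases "K < length (yield l)"; cases "K < length (yield r)")
      (auto intro: bexI[of _ "Node A l r"])
qed (use assms(1) in simp)

lemma sublist_append_Cons_notin:
  assumes "sublist y (u @ h # r)" "h \<notin> set y"
  shows "sublist y u \<or> sublist y r"
  using assms by (auto simp: sublist_append sublist_Cons_right prefix_Cons)

section \<open>Bounding rank-zero subderivations\<close>

locale word_problem_grammar =
  fixes G :: "('g, 'b) monoid_scheme"
    and \<Sigma> :: "'a set" and iv :: "'a \<Rightarrow> 'a" and \<phi> :: "'a list \<Rightarrow> 'g"
    and h :: 'a and R :: "'a list set"
    and N :: "'n set" and P2 :: "('n \<times> 'n \<times> 'n) set" and P1 :: "('n \<times> 'a) set" and S :: 'n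
  assumes gens: "choice_of_generators G \<Sigma> iv \<phi>"
    and hash: "h \<notin> \<Sigma>"
    and comb: "regular_combing G \<Sigma> \<phi> R"
    and cnf: "cnf_grammar N (insert h \<Sigma>) P2 P1 S"
    and gen_M: "lang_from P2 P1 S = word_problem_M G \<phi> h R"
begin

lemma is_group: "group G"
  and finite_alphabet: "finite \<Sigma>"
  and phi_append: "u \<in> lists \<Sigma> \<Longrightarrow> v \<in> lists \<Sigma> \<Longrightarrow> \<phi> (u @ v) = \<phi> u \<otimes>\<^bsub>G\<^esub> \<phi> v"
  and phi_closed: "u \<in> lists \<Sigma> \<Longrightarrow> \<phi> u \<in> carrier G"
  using gens by (auto simp: choice_of_generators_def)

lemma combing_lists: "R \<subseteq> lists \<Sigma>"
  and combing_regular: "regular_on \<Sigma> R"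
  and combing_image: "\<phi> ` R = carrier G"
  using comb by (auto simp: regular_combing_def)

lemma hash_notin_lists: "y \<in> lists \<Sigma> \<Longrightarrow> h \<notin> set y"
  using hash by auto

lemma removeAll_word_problem_M:
  assumes "x \<in> word_problem_M G \<phi> h R"
  shows "removeAll h x \<in> lists \<Sigma> \<and> \<phi> (removeAll h x) = \<one>\<^bsub>G\<^esub>"
proof -
  obtain u v w where x: "x = u @ [h] @ v @ [h] @ w" and uvw: "u \<in> R" "v \<in> R" "w \<in> R"
    and one: "\<phi> u \<otimes>\<^bsub>G\<^esub> \<phi> v \<otimes>\<^bsub>G\<^esub> \<phi> w = \<one>\<^bsub>G\<^esub>"
    using assms unfolding word_problem_M_def by blast
  have lists: "u \<in> lists \<Sigma>" "v \<in> lists \<Sigma>" "w \<in> lists \<Sigma>"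
    using uvw combing_lists by auto
  then have "removeAll h x = u @ v @ w"
    using hash_notin_lists by (simp add: x)
  moreover have "\<phi> (u @ v @ w) = \<phi> u \<otimes>\<^bsub>G\<^esub> \<phi> v \<otimes>\<^bsub>G\<^esub> \<phi> w"
    using lists phi_append phi_closed group.is_monoid[OF is_group] by (simp add: monoid.m_assoc)
  ultimately show ?thesis
    using lists one by simp
qed

text \<open>Erasing the separators turns a word of \<open>M\<close> into a relator.\<close>
lemma value_determined_by_context:
  assumes "\<alpha> @ z @ \<beta> \<in> word_problem_M G \<phi> h R" "\<alpha> @ z' @ \<beta> \<in> word_problem_M G \<phi> h R"
    and "z \<in> lists \<Sigma>" "z' \<in> lists \<Sigma>"
  shows "\<phi> z = \<phi> z'"
proof -
  interpret G: group G
    by (rule is_group)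
  define a b where "a = removeAll h \<alpha>" and "b = removeAll h \<beta>"
  have "removeAll h (\<alpha> @ y @ \<beta>) = a @ y @ b" if "y \<in> lists \<Sigma>" for y
    using that hash_notin_lists by (simp add: a_def b_def)
  then have relator: "a @ y @ b \<in> lists \<Sigma> \<and> \<phi> (a @ y @ b) = \<one>\<^bsub>G\<^esub>"
    if "\<alpha> @ y @ \<beta> \<in> word_problem_M G \<phi> h R" "y \<in> lists \<Sigma>" for y
    using that removeAll_word_problem_M by metis
  have ab: "a \<in> lists \<Sigma>" "b \<in> lists \<Sigma>"
    using relator[OF assms(1,3)] by auto
  have "\<phi> a \<otimes>\<^bsub>G\<^esub> (\<phi> z \<otimes>\<^bsub>G\<^esub> \<phi> b) = \<phi> a \<otimes>\<^bsub>G\<^esub> (\<phi> z' \<otimes>\<^bsub>G\<^esub> \<phi> b)"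
    using relator[OF assms(1,3)] relator[OF assms(2,4)] ab assms(3,4) by (simp add: phi_append)
  then show ?thesis
    using ab assms(3,4) by (simp add: phi_closed)
qed

definition occurs :: "'n \<Rightarrow> bool" where
  "occurs B \<longleftrightarrow> (\<exists>t s. valid_tree P2 P1 t \<and> root t = S \<and> s \<in> subtrees t \<and> root s = B)"

lemma rank_zero_lang_from_lists:
  assumes "rank_zero P2 P1 h B" "z \<in> lang_from P2 P1 B"
  shows "z \<in> lists \<Sigma>"
proof -
  have "set z \<subseteq> insert h \<Sigma>"
    using assms(2) set_yield_subset cnf by (fastforce simp: cnf_grammar_def elim!: lang_fromE)
  then show ?thesis
    using assms unfolding rank_zero_def by auto
qed

lemma occurring_rank_zero_same_value:
  assumes "occurs B" "rank_zero P2 P1 h B" "z \<in> lang_from P2 P1 B" "z' \<in> lang_from P2 P1 B"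
  shows "\<phi> z = \<phi> z'"
proof -
  obtain t s where "valid_tree P2 P1 t" "root t = S" "s \<in> subtrees t" "root s = B"
    using assms(1) unfolding occurs_def by blast
  then obtain \<alpha> \<beta> where "\<forall>y \<in> lang_from P2 P1 B. \<alpha> @ y @ \<beta> \<in> word_problem_M G \<phi> h R"
    using subtree_context gen_M by metis
  then show ?thesis
    using assms value_determined_by_context rank_zero_lang_from_lists by metis
qed

lemma exists_short_congruent_words:
  "\<exists>K>0. \<forall>B y. occurs B \<and> rank_zero P2 P1 h B \<and> y \<in> lang_from P2 P1 B \<longrightarrow>
     (\<exists>y' \<in> lang_from P2 P1 B. contexts R y' = contexts R y \<and> length y' < K)"
proof -
  let ?A = "{(B, y). occurs B \<and> rank_zero P2 P1 h B \<and> y \<in> lang_from P2 P1 B}"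
  let ?f = "\<lambda>(B, y). (B, contexts R y)"
  have "?f ` ?A \<subseteq> (fst ` P2 \<union> fst ` P1) \<times> contexts R ` lists \<Sigma>"
  proof clarify
    fix B y assume "occurs B" "rank_zero P2 P1 h B" "y \<in> lang_from P2 P1 B"
    then show "B \<in> fst ` P2 \<union> fst ` P1 \<and> contexts R y \<in> contexts R ` lists \<Sigma>"
      using root_in_lhs rank_zero_lang_from_lists by (metis image_eqI lang_fromE)
  qed
  moreover have "finite ((fst ` P2 \<union> fst ` P1) \<times> contexts R ` lists \<Sigma>)"
    using cnf finite_contexts_if_regular[OF combing_regular] by (simp add: cnf_grammar_def)
  ultimately have "finite (?f ` ?A)"
    by (rule finite_subset)
  then obtain K where K: "\<forall>x\<in>?A. \<exists>x'\<in>?A. ?f x' = ?f x \<and> length (snd x') < K"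
    using finite_image_bounded_representatives[of ?f ?A "\<lambda>x. length (snd x)"] by blast
  show ?thesis
  proof (intro exI[of _ "Suc K"] conjI allI impI)
    fix B y assume "occurs B \<and> rank_zero P2 P1 h B \<and> y \<in> lang_from P2 P1 B"
    then obtain B' y' where "(B', y') \<in> ?A" "(B', contexts R y') = (B, contexts R y)"
      and "length y' < K"
      using K by fastforce
    then show "\<exists>y' \<in> lang_from P2 P1 B. contexts R y' = contexts R y \<and> length y' < Suc K"
      by auto
  qed simp
qed

definition forbidden_factors :: "nat \<Rightarrow> 'a list set" where
  "forbidden_factors K = {y. \<exists>B. occurs B \<and> rank_zero P2 P1 h B \<and> y \<in> lang_from P2 P1 B \<and>
     K < length y \<and> length y \<le> 2 * K}"

lemma rank_zero_subtree_yield_bounded: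
  assumes t: "valid_tree P2 P1 t" "root t = S" "yield t = u @ [h] @ v @ [h] @ w"
    and "0 < K" and avoid: "\<forall>y\<in>forbidden_factors K. \<not> sublist y u \<and> \<not> sublist y v \<and> \<not> sublist y w"
    and s: "s \<in> subtrees t" "rank_zero P2 P1 h (root s)"
  shows "length (yield s) \<le> 2 * K"
proof (rule ccontr)
  assume "\<not> length (yield s) \<le> 2 * K"
  then obtain s' where s': "s' \<in> subtrees s" "K < length (yield s')" "length (yield s') \<le> 2 * K"
    using exists_subtree_yield_between[OF \<open>0 < K\<close>, of s] by auto
  have s'_t: "s' \<in> subtrees t"
    using s(1) s'(1) by (rule subtrees_trans)
  have rank_zero: "rank_zero P2 P1 h (root s')"
    using rank_zero_subtree[OF s(2) valid_tree_subtree[OF t(1) s(1)] s'(1)] .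
  have lang: "yield s' \<in> lang_from P2 P1 (root s')"
    using valid_tree_subtree[OF t(1) s'_t] by (rule yield_in_lang_from)
  have "occurs (root s')"
    using t(1,2) s'_t unfolding occurs_def by blast
  then have forbidden: "yield s' \<in> forbidden_factors K"
    using rank_zero lang s' by (auto simp: forbidden_factors_def)
  have "h \<notin> set (yield s')"
    using rank_zero lang by (auto simp: rank_zero_def)
  moreover have "sublist (yield s') (u @ h # v @ h # w)"
    using subtree_context[OF t(1) s'_t] t(3) by (auto simp: sublist_def)
  ultimately have "sublist (yield s') u \<or> sublist (yield s') v \<or> sublist (yield s') w"
    using sublist_append_Cons_notin by metis
  then show False
    using avoid forbidden by blast
qed

lemma forbidden_factor_shortenable:
  assumes short: "\<And>B y. occurs B \<Longrightarrow> rank_zero P2 P1 h B \<Longrightarrow> y \<in> lang_from P2 P1 B \<Longrightarrow>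
      \<exists>y' \<in> lang_from P2 P1 B. contexts R y' = contexts R y \<and> length y' < K"
    and "y \<in> forbidden_factors K"
  shows "\<exists>y'. length y' < length y \<and>
    (\<forall>p q. p @ y @ q \<in> R \<longrightarrow> p @ y' @ q \<in> R \<and> \<phi> (p @ y' @ q) = \<phi> (p @ y @ q))"
proof -
  obtain B where B: "occurs B" "rank_zero P2 P1 h B" "y \<in> lang_from P2 P1 B" "K < length y"
    using assms(2) unfolding forbidden_factors_def by blast
  then obtain y' where y': "y' \<in> lang_from P2 P1 B" "contexts R y' = contexts R y" "length y' < K"
    using short by blast
  have same: "\<phi> y' = \<phi> y" "y \<in> lists \<Sigma>" "y' \<in> lists \<Sigma>"
    using occurring_rank_zero_same_value rank_zero_lang_from_lists B y'(1) by blast+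
  have "p @ y' @ q \<in> R \<and> \<phi> (p @ y' @ q) = \<phi> (p @ y @ q)" if pyq: "p @ y @ q \<in> R" for p q
  proof
    show "p @ y' @ q \<in> R"
      using pyq y'(2) unfolding contexts_def by blast
    have "p \<in> lists \<Sigma>" "q \<in> lists \<Sigma>"
      using pyq combing_lists by auto
    then show "\<phi> (p @ y' @ q) = \<phi> (p @ y @ q)"
      using same by (simp add: phi_append)
  qed
  moreover have "length y' < length y"
    using y'(3) B(4) by simp
  ultimately show ?thesis
    by blast
qed

lemma bounded_rank_zero_subcombing:
  "\<exists>(K'::nat) R'. R' \<subseteq> R \<and> regular_combing G \<Sigma> \<phi> R' \<and>
     (\<forall>x \<in> word_problem_M G \<phi> h R \<inter> three_concat h R'.
        \<exists>t. valid_tree P2 P1 t \<and> root t = S \<and> yield t = x \<and>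
            (\<forall>s \<in> subtrees t. rank_zero P2 P1 h (root s) \<longrightarrow> length (yield s) \<le> K'))"
proof -
  obtain K where "0 < K" and short: "\<And>B y. occurs B \<Longrightarrow> rank_zero P2 P1 h B \<Longrightarrow>
      y \<in> lang_from P2 P1 B \<Longrightarrow> \<exists>y' \<in> lang_from P2 P1 B. contexts R y' = contexts R y \<and> length y' < K"
    using exists_short_congruent_words by blast
  define R' where "R' = {u \<in> R. \<not> (\<exists>y\<in>forbidden_factors K. sublist y u)}"
  have "\<phi> ` R' = \<phi> ` R"
    unfolding R'_def
    by (rule image_avoiding_shortenable_factors)
      (use forbidden_factor_shortenable[OF short] in blast)
  moreover have "regular_on \<Sigma> R'"
    unfolding R'_def using combing_regular finite_alphabet
    by (rule regular_on_avoiding_factors) (auto simp: forbidden_factors_def)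
  moreover have "R' \<subseteq> R"
    unfolding R'_def by blast
  ultimately have "regular_combing G \<Sigma> \<phi> R'"
    unfolding regular_combing_def using combing_lists combing_image by auto
  moreover have "\<exists>t. valid_tree P2 P1 t \<and> root t = S \<and> yield t = x \<and>
      (\<forall>s \<in> subtrees t. rank_zero P2 P1 h (root s) \<longrightarrow> length (yield s) \<le> 2 * K)"
    if x: "x \<in> word_problem_M G \<phi> h R \<inter> three_concat h R'" for x
  proof -
    have "x \<in> lang_from P2 P1 S"
      using x gen_M by simp
    then obtain t where t: "valid_tree P2 P1 t" "root t = S" "yield t = x"
      by (rule lang_fromE)
    obtain u v w where x_eq: "x = u @ [h] @ v @ [h] @ w" and "u \<in> R'" "v \<in> R'" "w \<in> R'"
      using x unfolding three_concat_def by blast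
    then have "\<forall>y\<in>forbidden_factors K. \<not> sublist y u \<and> \<not> sublist y v \<and> \<not> sublist y w"
      unfolding R'_def by blast
    then show ?thesis
      using rank_zero_subtree_yield_bounded[OF t(1,2) _ \<open>0 < K\<close>] t x_eq by auto
  qed
  ultimately show ?thesis
    using \<open>R' \<subseteq> R\<close> by blast
qed

end

theorem lemma5p1:
  fixes G :: "('g, 'b) monoid_scheme"
    and \<Sigma> :: "'a set" and iv :: "'a \<Rightarrow> 'a" and \<phi> :: "'a list \<Rightarrow> 'g"
    and h :: 'a and R :: "'a list set"
    and N :: "'n set" and P2 :: "('n \<times> 'n \<times> 'n) set" and P1 :: "('n \<times> 'a) set" and S :: 'n
  assumes gens: "choice_of_generators G \<Sigma> iv \<phi>"
    and hash: "h \<notin> \<Sigma>"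
    and comb: "regular_combing G \<Sigma> \<phi> R"
    and cnf: "cnf_grammar N (insert h \<Sigma>) P2 P1 S"
    and gen_M: "lang_from P2 P1 S = word_problem_M G \<phi> h R"
    and trim: "grammar_trim N P2 P1 S"
  shows "\<exists>(K'::nat) R'. R' \<subseteq> R \<and> regular_combing G \<Sigma> \<phi> R' \<and>
           (\<forall>x \<in> word_problem_M G \<phi> h R \<inter> three_concat h R'.
              \<exists>t. valid_tree P2 P1 t \<and> root t = S \<and> yield t = x \<and>
                  (\<forall>s \<in> subtrees t. rank_zero P2 P1 h (root s) \<longrightarrow> length (yield s) \<le> K'))"
proof -
  interpret word_problem_grammar G \<Sigma> iv \<phi> h R N P2 P1 S
    using gens hash comb cnf gen_M by unfold_locales
  show ?thesis
    by (rule bounded_rank_zero_subcombing)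
qed

end
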